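(* Let $\alpha\in(0,1)$ and let $0=t_0<t_1<t_2<\cdots$ be time levels with $\tau_k=t_k-t_{k-1}$, $r_k:=\tau_k/\tau_{k-1}$ ($k\ge2$), such that $r_k<r^*(\alpha)$ for all $k\ge2$. For a real sequence $(v^k)_{k\ge0}$ and $n\ge2$ set $$J^n_{B2}:=\Big(\frac{1}{2-\alpha}a^{(n)}_0+\frac{r_n\eta^{(n)}_0}{1+r_n}\Big)\nabla_\tau v^n-\frac{r_n^2\eta^{(n)}_0}{1+r_n}\nabla_\tau v^{n-1}.$$ Then for $n\ge2$, $$(\nabla_\tau v^n)J^n_{B2}\ge\frac{\alpha r_{n+1}^{2-\alpha/2}}{2(1+r_{n+1})\tau_n^\alpha}\frac{(\nabla_\tau v^n)^2}{\Gamma(3-\alpha)}-\frac{\alpha r_n^{2-\alpha/2}}{2(1+r_n)\tau_{n-1}^\alpha}\frac{(\nabla_\tau v^{n-1})^2}{\Gamma(3-\alpha)}+\frac{\mathrm{g}(r_n,r_{n+1},\alpha)}{2\Gamma(3-\alpha)\tau_n^\alpha}(\nabla_\tau v^n)^2.$$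
   Context: $\nabla_\tau v^k:=v^k-v^{k-1}$; $\omega_\beta(t):=t^{\beta-1}/\Gamma(\beta)$; $a^{(n)}_0:=\frac1{\tau_n}\int_{t_{n-1}}^{t_n}\omega_{1-\alpha}(t_n-s)\,ds$ and $\eta^{(n)}_0:=\frac{2}{\tau_n}\int_{t_{n-1}}^{t_n}\frac{s-t_{n-1/2}}{\tau_n}\omega_{1-\alpha}(t_n-s)\,ds$ with $t_{n-1/2}=(t_n+t_{n-1})/2$. $\mathrm{g}(x,y,\alpha):=\frac{2+2(1+\alpha)x-\alpha x^{2-\alpha/2}}{1+x}-\frac{\alpha y^{2-\alpha/2}}{1+y}$; $r^*(\alpha)$ is the unique positive root $z$ of $1/\alpha+(1+1/\alpha)z-z^{2-\alpha/2}=0$. *)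

theory Defs
  imports "HOL-Analysis.Analysis"
begin

definition nabla :: "(nat \<Rightarrow> real) \<Rightarrow> nat \<Rightarrow> real" where
  "nabla v k = v k - v (k - 1)"

definition omega :: "real \<Rightarrow> real \<Rightarrow> real" where
  "omega \<beta> s = s powr (\<beta> - 1) / Gamma \<beta>"

definition tau :: "(nat \<Rightarrow> real) \<Rightarrow> nat \<Rightarrow> real" where
  "tau t k = t k - t (k - 1)"

definition ratio :: "(nat \<Rightarrow> real) \<Rightarrow> nat \<Rightarrow> real" where
  "ratio t k = tau t k / tau t (k - 1)"

definition a0 :: "real \<Rightarrow> (nat \<Rightarrow> real) \<Rightarrow> nat \<Rightarrow> real" where
  "a0 \<alpha> t n = (1 / tau t n) *
     integral {t (n - 1)..t n} (\<lambda>s. omega (1 - \<alpha>) (t n - s))"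

definition eta0 :: "real \<Rightarrow> (nat \<Rightarrow> real) \<Rightarrow> nat \<Rightarrow> real" where
  "eta0 \<alpha> t n = (2 / tau t n) *
     integral {t (n - 1)..t n}
       (\<lambda>s. (s - (t n + t (n - 1)) / 2) / tau t n * omega (1 - \<alpha>) (t n - s))"

definition gfun :: "real \<Rightarrow> real \<Rightarrow> real \<Rightarrow> real" where
  "gfun x y \<alpha> = (2 + 2 * (1 + \<alpha>) * x - \<alpha> * x powr (2 - \<alpha> / 2)) / (1 + x)
                 - \<alpha> * y powr (2 - \<alpha> / 2) / (1 + y)"

definition rstar :: "real \<Rightarrow> real" where
  "rstar \<alpha> = (THE z. z > 0 \<and> 1 / \<alpha> + (1 + 1 / \<alpha>) * z - z powr (2 - \<alpha> / 2) = 0)"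

definition JB2 :: "real \<Rightarrow> (nat \<Rightarrow> real) \<Rightarrow> (nat \<Rightarrow> real) \<Rightarrow> nat \<Rightarrow> real" where
  "JB2 \<alpha> t v n =
     (a0 \<alpha> t n / (2 - \<alpha>) + ratio t n * eta0 \<alpha> t n / (1 + ratio t n)) * nabla v n
     - (ratio t n)^2 * eta0 \<alpha> t n / (1 + ratio t n) * nabla v (n - 1)"

end

theory Submission
  imports Defs
begin

(* Both coefficients of J are explicit: integrating the kernel gives
   a0 = tau_n^(-alpha) / Gamma(2 - alpha) and eta0 = alpha / (2 - alpha) * a0, so J is
   1 / (Gamma(3 - alpha) tau_n^alpha) times a fixed combination of the last two increments.
   The cross term nabla v^n * nabla v^(n-1) is split by Young's inequality with weight
   q = r_n^(alpha/2); this weight turns r_n^2 / q into r_n^(2 - alpha/2) and tau_n^alpha / q^2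
   into tau_(n-1)^alpha, while the r_(n+1) terms on the right-hand side cancel. *)

lemma Gamma_plus1_pos:
  fixes \<beta> :: real
  assumes "0 < \<beta>"
  shows "Gamma (\<beta> + 1) = \<beta> * Gamma \<beta>"
  using assms by (intro Gamma_plus1) (auto elim!: nonpos_Ints_cases)

lemma omega_succ:
  assumes "0 < \<beta>" "0 \<le> x"
  shows "omega (\<beta> + 1) x = x * omega \<beta> x / \<beta>"
  using assms by (simp add: omega_def Gamma_plus1_pos powr_mult_base)

lemma has_integral_omega:
  assumes "0 < \<beta>" "a \<le> b"
  shows "((\<lambda>s. omega \<beta> (b - s)) has_integral omega (\<beta> + 1) (b - a)) {a..b}"
proof -
  let ?F = "\<lambda>s. - omega (\<beta> + 1) (b - s)"
  have Gamma_pos: "Gamma (\<beta> + 1) > 0"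
    using assms by simp
  have "((\<lambda>s. omega \<beta> (b - s)) has_integral ?F b - ?F a) {a..b}"
  proof (rule fundamental_theorem_of_calculus_interior)
    show "continuous_on {a..b} ?F"
      using assms Gamma_pos unfolding omega_def
      by (auto intro!: continuous_intros continuous_on_powr' simp del: Gamma_real_pos)
    fix x assume x: "x \<in> {a<..<b}"
    have "(?F has_real_derivative \<beta> * (b - x) powr (\<beta> - 1) / Gamma (\<beta> + 1)) (at x)"
      using x Gamma_pos unfolding omega_def
      by (auto intro!: derivative_eq_intros simp del: Gamma_real_pos)
    moreover have "\<beta> * (b - x) powr (\<beta> - 1) / Gamma (\<beta> + 1) = omega \<beta> (b - x)"
      using assms by (simp add: omega_def Gamma_plus1_pos)
    ultimately show "(?F has_vector_derivative omega \<beta> (b - x)) (at x)"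
      by (simp add: has_real_derivative_iff_has_vector_derivative)
  qed (use assms in auto)
  then show ?thesis
    using assms by (simp add: omega_def)
qed

lemma a0_eq:
  assumes "\<alpha> < 1" "t (n - 1) < t n"
  shows "a0 \<alpha> t n = omega (2 - \<alpha>) (tau t n) / tau t n"
proof -
  have "((\<lambda>s. omega (1 - \<alpha>) (t n - s)) has_integral omega (2 - \<alpha>) (tau t n)) {t (n - 1)..t n}"
    using has_integral_omega[of "1 - \<alpha>" "t (n - 1)" "t n"] assms by (simp add: tau_def)
  then show ?thesis
    by (simp add: a0_def integral_unique)
qed

lemma eta0_eq_a0:
  assumes "\<alpha> < 1" "t (n - 1) < t n"
  shows "eta0 \<alpha> t n = \<alpha> / (2 - \<alpha>) * a0 \<alpha> t n"
proof -
  define h where "h = tau t n"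
  have h: "0 < h"
    using assms by (simp add: h_def tau_def)
  have integrand: "(s - (t n + t (n - 1)) / 2) / h * omega (1 - \<alpha>) (t n - s)
      = omega (1 - \<alpha>) (t n - s) / 2 - (1 - \<alpha>) / h * omega (2 - \<alpha>) (t n - s)"
    if "s \<in> {t (n - 1)..t n}" for s
  proof -
    let ?w = "omega (1 - \<alpha>) (t n - s)"
    have "(s - (t n + t (n - 1)) / 2) / h * ?w = ?w / 2 - (t n - s) * ?w / h"
      using h by (simp add: h_def tau_def field_simps)
    moreover have "(t n - s) * ?w = (1 - \<alpha>) * omega (2 - \<alpha>) (t n - s)"
      using that assms omega_succ[of "1 - \<alpha>" "t n - s"] by simp
    ultimately show ?thesis
      by simp
  qed
  have "((\<lambda>s. omega (1 - \<alpha>) (t n - s) / 2 - (1 - \<alpha>) / h * omega (2 - \<alpha>) (t n - s))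
      has_integral omega (2 - \<alpha>) h / 2 - (1 - \<alpha>) / h * omega (3 - \<alpha>) h) {t (n - 1)..t n}"
    using has_integral_omega[of "1 - \<alpha>" "t (n - 1)" "t n"]
      has_integral_omega[of "2 - \<alpha>" "t (n - 1)" "t n"] assms
    by (intro has_integral_diff has_integral_divide has_integral_mult_right)
       (simp_all add: h_def tau_def)
  then have "integral {t (n - 1)..t n} (\<lambda>s. (s - (t n + t (n - 1)) / 2) / h * omega (1 - \<alpha>) (t n - s))
      = omega (2 - \<alpha>) h / 2 - (1 - \<alpha>) / h * omega (3 - \<alpha>) h"
    by (intro integral_unique has_integral_cong[OF integrand, THEN iffD2])
  moreover have "omega (3 - \<alpha>) h = h * omega (2 - \<alpha>) h / (2 - \<alpha>)"
    using omega_succ[of "2 - \<alpha>" h] assms h by simp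
  ultimately show ?thesis
    using assms h by (simp add: eta0_def a0_eq flip: h_def) (simp add: field_simps)
qed

lemma a0_div_eq:
  assumes "\<alpha> < 1" "t (n - 1) < t n"
  shows "a0 \<alpha> t n / (2 - \<alpha>) = 1 / (Gamma (3 - \<alpha>) * tau t n powr \<alpha>)"
proof -
  have "Gamma (3 - \<alpha>) = (2 - \<alpha>) * Gamma (2 - \<alpha>)"
    using Gamma_plus1_pos[of "2 - \<alpha>"] assms by simp
  moreover have "0 < tau t n"
    using assms by (simp add: tau_def)
  ultimately show ?thesis
    using assms by (simp add: a0_eq omega_def powr_diff)
qed

lemma JB2_eq:
  assumes "\<alpha> < 1" "t (n - 1) < t n"
  shows "JB2 \<alpha> t v n = a0 \<alpha> t n / (2 - \<alpha>) *
    ((1 + \<alpha> * ratio t n / (1 + ratio t n)) * nabla v n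
      - \<alpha> * (ratio t n)\<^sup>2 / (1 + ratio t n) * nabla v (n - 1))"
  by (simp add: JB2_def eta0_eq_a0[OF assms] algebra_simps)

lemma weighted_young_bound:
  fixes x y r q T G R S \<alpha> :: real
  assumes "0 < r" "0 < q" "0 < T" "0 < G" "0 \<le> \<alpha>"
  shows "\<alpha> * R / (2 * (1 + S) * T) * x\<^sup>2 / G
       - \<alpha> * (r\<^sup>2 / q) / (2 * (1 + r) * (T / q\<^sup>2)) * y\<^sup>2 / G
       + ((2 + 2 * (1 + \<alpha>) * r - \<alpha> * (r\<^sup>2 / q)) / (1 + r) - \<alpha> * R / (1 + S)) / (2 * G * T) * x\<^sup>2
     \<le> x * (1 / (G * T) * ((1 + \<alpha> * r / (1 + r)) * x - \<alpha> * r\<^sup>2 / (1 + r) * y))"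
    (is "?lhs \<le> ?rhs")
proof -
  define c where "c = \<alpha> * r\<^sup>2 / (2 * q * (1 + r))"
  \<comment> \<open>Folding 1 + r and 1 + S into atoms keeps field_simps from distributing over them;
     1 + S may vanish, but the R-terms cancel either way.\<close>
  define s where "s = 1 + r"
  define s' where "s' = 1 + S"
  have nonzero: "s \<noteq> 0" "q \<noteq> 0" "T \<noteq> 0" "G \<noteq> 0"
    using assms by (auto simp: s_def)
  have young: "2 * q * x * y \<le> x\<^sup>2 + q\<^sup>2 * y\<^sup>2"
    using sum_squares_bound[of x "q * y"] by (simp add: power_mult_distrib mult.left_commute)
  have "?lhs = (x\<^sup>2 + \<alpha> * r / (1 + r) * x\<^sup>2 - c * (x\<^sup>2 + q\<^sup>2 * y\<^sup>2)) / (G * T)"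
    using nonzero unfolding c_def s_def[symmetric] s'_def[symmetric]
    by (cases "s' = 0")
       (simp_all add: field_simps power2_eq_square, simp_all add: s_def algebra_simps)
  also have "\<dots> \<le> (x\<^sup>2 + \<alpha> * r / (1 + r) * x\<^sup>2 - c * (2 * q * x * y)) / (G * T)"
    using young assms by (intro divide_right_mono diff_left_mono mult_left_mono) (auto simp: c_def)
  also have "\<dots> = ?rhs"
    using nonzero unfolding c_def s_def[symmetric] by (simp add: field_simps power2_eq_square)
  finally show ?thesis .
qed

theorem lemma2p2:
  fixes \<alpha> :: real and t v :: "nat \<Rightarrow> real" and n :: nat
  assumes "0 < \<alpha>" "\<alpha> < 1"
    and "t 0 = 0" and "strict_mono t"
    and "\<And>k. k \<ge> 2 \<Longrightarrow> ratio t k < rstar \<alpha>"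
    and "n \<ge> 2"
  shows "nabla v n * JB2 \<alpha> t v n \<ge>
      \<alpha> * ratio t (n + 1) powr (2 - \<alpha> / 2) / (2 * (1 + ratio t (n + 1)) * tau t n powr \<alpha>)
        * (nabla v n)^2 / Gamma (3 - \<alpha>)
    - \<alpha> * ratio t n powr (2 - \<alpha> / 2) / (2 * (1 + ratio t n) * tau t (n - 1) powr \<alpha>)
        * (nabla v (n - 1))^2 / Gamma (3 - \<alpha>)
    + gfun (ratio t n) (ratio t (n + 1)) \<alpha> / (2 * Gamma (3 - \<alpha>) * tau t n powr \<alpha>) * (nabla v n)^2"
proof -
  have step_pos: "0 < tau t k" if "1 \<le> k" for k
    using that \<open>strict_mono t\<close> by (simp add: tau_def strict_mono_less)
  have steps: "0 < tau t n" "0 < tau t (n - 1)"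
    using step_pos \<open>n \<ge> 2\<close> by auto
  then have incr: "t (n - 1) < t n" and r: "0 < ratio t n"
    by (simp_all add: tau_def ratio_def)
  define q where "q = ratio t n powr (\<alpha> / 2)"
  have q: "0 < q"
    using r by (simp add: q_def)
  have "q\<^sup>2 = ratio t n powr \<alpha>"
    using r by (simp add: q_def powr_power)
  also have "\<dots> = tau t n powr \<alpha> / tau t (n - 1) powr \<alpha>"
    by (simp add: ratio_def powr_divide)
  finally have prev_step: "tau t (n - 1) powr \<alpha> = tau t n powr \<alpha> / q\<^sup>2"
    using steps by simp
  have ratio_powr: "ratio t n powr (2 - \<alpha> / 2) = (ratio t n)\<^sup>2 / q"
    using r by (simp add: q_def powr_diff)
  show ?thesis
    unfolding JB2_eq[OF \<open>\<alpha> < 1\<close> incr] a0_div_eq[OF \<open>\<alpha> < 1\<close> incr] gfun_def prev_step ratio_powr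
    using r q steps \<open>0 < \<alpha>\<close> \<open>\<alpha> < 1\<close>
    by (intro weighted_young_bound) auto
qed

end
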